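(* Let $\epsilon, b, c \in \mathbb{C}$ with $\epsilon\neq 0$ and $1-\tfrac13\epsilon^2 b\neq 0$. Consider the map $\Phi:(x,y)\mapsto(\widetilde x,\widetilde y)$ of $\mathbb{C}^2$ defined implicitly by the system (linear in $(\widetilde x,\widetilde y)$, hence defining a birational map) \[ \frac{\widetilde x - x}{\epsilon}=x\widetilde y+\widetilde x y, \qquad \frac{\widetilde y-y}{\epsilon}= b+c(1-\epsilon^2b)(x+\widetilde x)+\big(1-\epsilon^2c^2(2-\epsilon^2b)\big)x \widetilde x -(2-\epsilon^2b)\,y \widetilde y . \] Set \[ p=\frac{(1-\epsilon^2 b)(1-\frac{1}{2}\epsilon^2 b)}{1-\frac{1}{3}\epsilon^2b},\qquad a_1=1-\epsilon^2b-\tfrac{4}{3}\epsilon^2c^2p,\qquad c_1=cp, \] \[ m_1=1+\epsilon y+\epsilon(1-\epsilon c)x,\quad m_2=1+\epsilon y-\epsilon(1+\epsilon c)x,\quad m_3=1-\epsilon y+\epsilon(1-\epsilon c)x,\quad m_4=1-\epsilon y-\epsilon(1+\epsilon c)x . \] Then $\Phi$ is integrable in the sense that the rational function \[ H(x,y;\epsilon)=\frac{x^2\big((1-\frac{1}{2}\epsilon^2b)y^2-\frac{1}{4}a_1x^2-\frac{2}{3}c_1x-\frac{1}{2}b\big)}{m_1(x,y)\,m_2(x,y)\,m_3(x,y)\,m_4(x,y)} \] satisfies $H(\widetilde x,\widetilde y;\epsilon)=H(x,y;\epsilon)$ for all $(x,y)$ at which $\Phi$ and both sides are defined.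
   Context: This map is a modification of the Kahan discretization of the planar system $\dot x=2xy$, $\dot y=b+2cx+x^2-2y^2$ (whose standard Kahan discretization is $(\widetilde x-x)/\epsilon=\widetilde x y+x\widetilde y$, $(\widetilde y-y)/\epsilon=b+c(x+\widetilde x)+x\widetilde x-2y\widetilde y$). An integral of motion of a map $\Phi$ is a (nonconstant) function $H$ with $H\circ\Phi=H$. *)

theory Defs
  imports Complex_Main
begin

definition phi_rel :: "complex \<Rightarrow> complex \<Rightarrow> complex \<Rightarrow> complex \<Rightarrow> complex \<Rightarrow> complex \<Rightarrow> complex \<Rightarrow> bool" where
  "phi_rel eps b c x y xt yt \<longleftrightarrow>
     (xt - x) / eps = x * yt + xt * y \<and>
     (yt - y) / eps = b + c * (1 - eps^2 * b) * (x + xt)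
        + (1 - eps^2 * c^2 * (2 - eps^2 * b)) * x * xt - (2 - eps^2 * b) * y * yt"

definition phi_defined :: "complex \<Rightarrow> complex \<Rightarrow> complex \<Rightarrow> complex \<Rightarrow> complex \<Rightarrow> bool" where
  "phi_defined eps b c x y \<longleftrightarrow> (\<exists>!q. phi_rel eps b c x y (fst q) (snd q))"

definition p_par :: "complex \<Rightarrow> complex \<Rightarrow> complex" where
  "p_par eps b = (1 - eps^2 * b) * (1 - eps^2 * b / 2) / (1 - eps^2 * b / 3)"

definition a1_par :: "complex \<Rightarrow> complex \<Rightarrow> complex \<Rightarrow> complex" where
  "a1_par eps b c = 1 - eps^2 * b - 4/3 * eps^2 * c^2 * p_par eps b"

definition c1_par :: "complex \<Rightarrow> complex \<Rightarrow> complex \<Rightarrow> complex" where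
  "c1_par eps b c = c * p_par eps b"

definition m1 :: "complex \<Rightarrow> complex \<Rightarrow> complex \<Rightarrow> complex \<Rightarrow> complex" where
  "m1 eps c x y = 1 + eps * y + eps * (1 - eps * c) * x"
definition m2 :: "complex \<Rightarrow> complex \<Rightarrow> complex \<Rightarrow> complex \<Rightarrow> complex" where
  "m2 eps c x y = 1 + eps * y - eps * (1 + eps * c) * x"
definition m3 :: "complex \<Rightarrow> complex \<Rightarrow> complex \<Rightarrow> complex \<Rightarrow> complex" where
  "m3 eps c x y = 1 - eps * y + eps * (1 - eps * c) * x"
definition m4 :: "complex \<Rightarrow> complex \<Rightarrow> complex \<Rightarrow> complex \<Rightarrow> complex" where
  "m4 eps c x y = 1 - eps * y - eps * (1 + eps * c) * x"

definition mprod :: "complex \<Rightarrow> complex \<Rightarrow> complex \<Rightarrow> complex \<Rightarrow> complex" where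
  "mprod eps c x y = m1 eps c x y * m2 eps c x y * m3 eps c x y * m4 eps c x y"

definition H :: "complex \<Rightarrow> complex \<Rightarrow> complex \<Rightarrow> complex \<Rightarrow> complex \<Rightarrow> complex" where
  "H eps b c x y =
     x^2 * ((1 - eps^2 * b / 2) * y^2 - a1_par eps b c * x^2 / 4 - 2/3 * c1_par eps b c * x - b / 2)
     / mprod eps c x y"

end

theory Submission
  imports Defs
begin

text \<open>The defining relations are linear in the image point, so by Cramer's rule the image has
  homogeneous coordinates \<open>(X : Y : D)\<close> that are polynomials in \<open>(x, y)\<close>, with \<open>D \<noteq> 0\<close> exactly
  where the map is defined. Clearing the denominator of \<open>p\<close>, the numerator and the denominator
  of \<open>H\<close> become quartic forms once homogenized, so the invariance of \<open>H\<close> reduces to one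
  polynomial identity \<open>N(X,Y,D) M(x,y,1) = N(x,y,1) M(X,Y,D)\<close>, which is checked by ring
  normalization.\<close>

lemma unique_solution_cramer:
  fixes a11 a12 a21 a22 r1 r2 u v :: "'a::field"
  assumes unique: "\<exists>!q. a11 * fst q + a12 * snd q = r1 \<and> a21 * fst q + a22 * snd q = r2"
    and eq1: "a11 * u + a12 * v = r1" and eq2: "a21 * u + a22 * v = r2"
  shows "\<exists>d. d \<noteq> 0 \<and>
    (r1 * a22 - a12 * r2, a11 * r2 - a21 * r1, a11 * a22 - a12 * a21) = (d * u, d * v, d)"
proof (intro exI conjI)
  let ?d = "a11 * a22 - a12 * a21"
  have solves: "a11 * fst q + a12 * snd q = r1 \<and> a21 * fst q + a22 * snd q = r2 \<longleftrightarrow> q = (u, v)"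
    for q using unique eq1 eq2 by (metis fst_conv snd_conv)
  show "?d \<noteq> 0"
  proof
    assume det: "?d = 0"
    \<comment> \<open>a nonzero kernel vector, added to \<open>(u, v)\<close>, gives a second solution\<close>
    obtain k where k: "k \<noteq> (0, 0)" "a11 * fst k + a12 * snd k = 0" "a21 * fst k + a22 * snd k = 0"
    proof (cases "a11 = 0 \<and> a12 = 0")
      case True
      show thesis
      proof (cases "a21 = 0 \<and> a22 = 0")
        case True
        with \<open>a11 = 0 \<and> a12 = 0\<close> show thesis by (intro that[of "(1, 0)"]) auto
      next
        case False
        with \<open>a11 = 0 \<and> a12 = 0\<close> show thesis
          by (intro that[of "(a22, - a21)"]) (auto simp: algebra_simps)
      qed
    next
      case False
      with det show thesis
        by (intro that[of "(a12, - a11)"]) (auto simp: algebra_simps)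
    qed
    then have "(u + fst k, v + snd k) = (u, v)"
      using eq1 eq2 solves[of "(u + fst k, v + snd k)"] by (simp add: algebra_simps)
    with k(1) show False by (simp add: prod_eq_iff)
  qed
  show "(r1 * a22 - a12 * r2, a11 * r2 - a21 * r1, ?d) = (?d * u, ?d * v, ?d)"
    using eq1 eq2 by (auto simp: algebra_simps)
qed

lemma phi_rel_iff_linear_system:
  assumes "eps \<noteq> 0"
  shows "phi_rel eps b c x y u v \<longleftrightarrow>
    (1 - eps * y) * u + (- eps * x) * v = x \<and>
    (- eps * (c * (1 - eps^2 * b) + (1 - eps^2 * c^2 * (2 - eps^2 * b)) * x)) * u
      + (1 + eps * (2 - eps^2 * b) * y) * v = y + eps * b + eps * c * (1 - eps^2 * b) * x"
  unfolding phi_rel_def using assms by (simp add: field_simps)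

definition kahan_hom_image :: "complex \<Rightarrow> complex \<Rightarrow> complex \<Rightarrow> complex \<Rightarrow> complex \<Rightarrow> complex \<times> complex \<times> complex"
  where "kahan_hom_image eps b c x y =
    (let a11 = 1 - eps * y; a12 = - eps * x;
         a21 = - eps * (c * (1 - eps^2 * b) + (1 - eps^2 * c^2 * (2 - eps^2 * b)) * x);
         a22 = 1 + eps * (2 - eps^2 * b) * y;
         r1 = x; r2 = y + eps * b + eps * c * (1 - eps^2 * b) * x
     in (r1 * a22 - a12 * r2, a11 * r2 - a21 * r1, a11 * a22 - a12 * a21))"

lemma kahan_hom_image_eq:
  assumes "eps \<noteq> 0" and "phi_defined eps b c x y" and "phi_rel eps b c x y xt yt"
  shows "\<exists>d. d \<noteq> 0 \<and> kahan_hom_image eps b c x y = (d * xt, d * yt, d)"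
  using assms(2,3) unfolding phi_defined_def phi_rel_iff_linear_system[OF assms(1)]
    kahan_hom_image_def Let_def
  by (blast intro: unique_solution_cramer)

text \<open>\<open>integral_num\<close> is the homogenized numerator of \<open>H\<close> multiplied by \<open>12 (1 - \<epsilon>\<^sup>2 b / 3)\<close>,
  which clears the denominator of \<open>p\<close>.\<close>

definition integral_num :: "complex \<Rightarrow> complex \<Rightarrow> complex \<Rightarrow> complex \<Rightarrow> complex \<Rightarrow> complex \<Rightarrow> complex"
  where "integral_num eps b c u v w =
    u^2 * (2 * (3 - eps^2 * b) * (2 - eps^2 * b) * v^2
      - (1 - eps^2 * b) * (3 - eps^2 * b - 2 * eps^2 * c^2 * (2 - eps^2 * b)) * u^2
      - 4 * c * (1 - eps^2 * b) * (2 - eps^2 * b) * u * w - 2 * (3 - eps^2 * b) * b * w^2)"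

definition integral_den :: "complex \<Rightarrow> complex \<Rightarrow> complex \<Rightarrow> complex \<Rightarrow> complex \<Rightarrow> complex"
  where "integral_den eps c u v w =
    (w + eps * v + eps * (1 - eps * c) * u) * (w + eps * v - eps * (1 + eps * c) * u)
      * (w - eps * v + eps * (1 - eps * c) * u) * (w - eps * v - eps * (1 + eps * c) * u)"

lemma integral_num_homogeneous:
  "integral_num eps b c (d * u) (d * v) (d * w) = d^4 * integral_num eps b c u v w"
  unfolding integral_num_def by algebra

lemma integral_den_homogeneous:
  "integral_den eps c (d * u) (d * v) (d * w) = d^4 * integral_den eps c u v w"
  unfolding integral_den_def by algebra

lemma mprod_eq_integral_den: "mprod eps c x y = integral_den eps c x y 1"
  unfolding mprod_def m1_def m2_def m3_def m4_def integral_den_def by simp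

lemma H_eq_integral_quotient:
  assumes "1 - eps^2 * b / 3 \<noteq> 0"
  shows "H eps b c x y =
    integral_num eps b c x y 1 / (12 * (1 - eps^2 * b / 3) * integral_den eps c x y 1)"
proof -
  have p: "(1 - eps^2 * b / 3) * p_par eps b = (1 - eps^2 * b) * (1 - eps^2 * b / 2)"
    unfolding p_par_def using assms by simp
  have num: "integral_num eps b c x y 1 = 12 * (1 - eps^2 * b / 3) *
    (x^2 * ((1 - eps^2 * b / 2) * y^2 - a1_par eps b c * x^2 / 4 - 2/3 * c1_par eps b c * x - b / 2))"
    using p unfolding integral_num_def a1_par_def c1_par_def power_one mult_1_right by algebra
  have "12 * (1 - eps^2 * b / 3) \<noteq> 0" using assms by (simp add: mult.commute)
  then show ?thesis
    unfolding H_def num mprod_eq_integral_den by simp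
qed

lemma integral_cross_invariant:
  assumes "kahan_hom_image eps b c x y = (u, v, w)"
  shows "integral_num eps b c u v w * integral_den eps c x y 1
    = integral_num eps b c x y 1 * integral_den eps c u v w"
  using assms unfolding kahan_hom_image_def Let_def integral_num_def integral_den_def
    power_one mult_1_right
  by (elim Pair_inject) (hypsubst_thin, algebra)

theorem theorem2:
  fixes eps b c x y xt yt :: complex
  assumes "eps \<noteq> 0"
    and "1 - eps^2 * b / 3 \<noteq> 0"
    and "phi_defined eps b c x y"
    and "phi_rel eps b c x y xt yt"
    and "mprod eps c x y \<noteq> 0"
    and "mprod eps c xt yt \<noteq> 0"
  shows "H eps b c xt yt = H eps b c x y"
proof -
  let ?N = "integral_num eps b c" and ?M = "integral_den eps c"
  obtain d where "d \<noteq> 0" and image: "kahan_hom_image eps b c x y = (d * xt, d * yt, d * 1)"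
    using kahan_hom_image_eq[OF assms(1,3,4)] by auto
  have "d^4 * (?N xt yt 1 * ?M x y 1) = d^4 * (?N x y 1 * ?M xt yt 1)"
    using integral_cross_invariant[OF image]
    unfolding integral_num_homogeneous integral_den_homogeneous by (simp add: ac_simps)
  with \<open>d \<noteq> 0\<close> have cross: "?N xt yt 1 * ?M x y 1 = ?N x y 1 * ?M xt yt 1" by simp
  have "?M x y 1 \<noteq> 0" "?M xt yt 1 \<noteq> 0"
    using assms(5,6) unfolding mprod_eq_integral_den .
  with cross show ?thesis
    unfolding H_eq_integral_quotient[OF assms(2)] using assms(2)
    by (simp add: frac_eq_eq mult.commute mult.left_commute)
qed

end
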